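(* Let $p$ be an odd prime and $k\ge1$. For $0\le l<p^k$, $$\mathcal M_{V_{2,l}}=\begin{cases}\frac{p-1}{2}(2p+1), & l<\frac{p^k-1}{2},\\[2pt] \frac{p-1}{2}(2p-1), & l\ge\frac{p^k-1}{2}.\end{cases}$$
   Context: Fix an odd prime $p$ and an integer $k\ge 0$. For integers $0\le i<n$ write $\lambda(n,i)=(n-i,1^i)$ for the hook partition of $n$ with $n-i$ boxes in its first row and $i$ further boxes in its first column. If $\mu=\lambda(n',i')$ is obtained from $\lambda(n,i)$ by appending $m=(n'-i')-(n-i)\ge 0$ boxes to the first row and $n''=i'-i\ge 0$ boxes to the first column, we say $\mu$ is obtained by adding the block $B_{m,n''}$ ($m$ horizontal nodes, $n''$ vertical nodes). Put $x_s=p^k(sp-(s+1))$. The relevant part ("column $k$") of the $p$-Bratteli diagram is the graded directed graph with vertices: on floor $2k+1$, $S_i=\lambda(p^k(p-1),i)$ for $0\le i<p^k(p-1)$; on floor $2(k+s)$ ($s\ge1$), $V_{s,l}=\lambda\big(p^k(2sp-(2s+1)),\,x_s+l\big)$ for $0\le l<p^k$; on floor $2(k+s)-1$ ($s\ge2$), $W_{s,l'}=\lambda\big(p^k((2s-1)p-2s),\,x_{s-1}+l'\big)$ for $0\le l'<p^{k+1}$; and edges, each labelled by the block added: (E1) $S_i\to V_{1,l}$ exactly when $i=p^kt+l$ with $0\le t\le p-2$, block $B_{p^kt,\,p^k(p-2-t)}$; (E2) for $s\ge2$, $0\le l<p^k$, $0\le\beta\le p-1$: $V_{s-1,l}\to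 W_{s,pl+\beta}$, block $B_{p^k(p-1)-((p-1)l+\beta),\,(p-1)l+\beta}$; (E3) for $s\ge 2$, $0\le l'<p^{k+1}$ and $t=\lfloor l'/p^k\rfloor$: $W_{s,l'}\to V_{s,l'-p^kt}$, block $B_{p^kt,\,p^k(p-1-t)}$. A path ending at a vertex $v$ is a sequence of edges starting at some $S_i$ and going up one floor at a time to $v$ ($S_i\to V_{1,\cdot}\to W_{2,\cdot}\to V_{2,\cdot}\to W_{3,\cdot}\to\cdots\to v$); $\mathcal P(v)$ is the set of all paths ending at $v$. The blocks of a path are numbered $B^2,B^3,\dots,B^N$: $B^2$ is the block of the edge leaving $S_i$, and for $j\ge2$, $B^{2j-1}$ is the block of the edge into $W_{j,\cdot}$ and $B^{2j}$ the block of the edge into $V_{j,\cdot}$. Write $B^j=B_{m_j,n_j}$. Descents: $1\in\mathrm{Des}(P)$ iff $m_2=p^kt$ with $0\le t<\frac{p-1}{2}$; $2\notin\mathrm{Des}(P)$; for $3\le j<N$, $j\in\mathrm{Des}(P)$ iff $m_j>m_{j+1}$ and $n_j<n_{j+1}$. $\mathrm{des}(P)=|\mathrm{Des}(P)|$. The $p^k$-Fibonacci number of a vertex $v$ is $\mathcal M_v=\sum_{P\in\mathcal P(v)}\mathrm{des}(P)$. *)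

theory Defs
  imports "HOL-Computational_Algebra.Primes"
begin

text \<open>Vertices of column k of the p-Bratteli diagram:
  S i = S_i (floor 2k+1), V s l = V_{s,l} (floor 2(k+s)), W s l' = W_{s,l'} (floor 2(k+s)-1).\<close>
datatype vtx = S nat | V nat nat | W nat nat

fun valid_vtx :: "nat \<Rightarrow> nat \<Rightarrow> vtx \<Rightarrow> bool" where
  "valid_vtx p k (S i) = (i < p^k * (p - 1))"
| "valid_vtx p k (V s l) = (1 \<le> s \<and> l < p^k)"
| "valid_vtx p k (W s l') = (2 \<le> s \<and> l' < p^(k+1))"

text \<open>Block labelling the edge u -> v (m horizontal, n vertical nodes), or None if no edge.\<close>
fun edge_block :: "nat \<Rightarrow> nat \<Rightarrow> vtx \<Rightarrow> vtx \<Rightarrow> (nat \<times> nat) option" where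
  "edge_block p k (S i) (V s l) =
     (if valid_vtx p k (S i) \<and> valid_vtx p k (V s l) \<and> s = 1
         \<and> (\<exists>t. t \<le> p - 2 \<and> i = p^k * t + l)
      then (let t = (i - l) div p^k in Some (p^k * t, p^k * (p - 2 - t)))
      else None)"
| "edge_block p k (V s l) (W s' l') =
     (if valid_vtx p k (V s l) \<and> valid_vtx p k (W s' l') \<and> s' = s + 1
         \<and> (\<exists>\<beta>. \<beta> \<le> p - 1 \<and> l' = p * l + \<beta>)
      then (let \<beta> = l' - p * l in
            Some (p^k * (p - 1) - ((p - 1) * l + \<beta>), (p - 1) * l + \<beta>))
      else None)"
| "edge_block p k (W s l') (V s' l) =
     (let t = l' div p^k in
      if valid_vtx p k (W s l') \<and> valid_vtx p k (V s' l) \<and> s' = s \<and> l = l' - p^k * t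
      then Some (p^k * t, p^k * (p - 1 - t))
      else None)"
| "edge_block p k _ _ = None"

fun is_S :: "vtx \<Rightarrow> bool" where
  "is_S (S _) = True" | "is_S _ = False"

definition paths :: "nat \<Rightarrow> nat \<Rightarrow> vtx \<Rightarrow> vtx list set" where
  "paths p k v = {vs. vs \<noteq> [] \<and> is_S (hd vs) \<and> valid_vtx p k (hd vs) \<and> last vs = v \<and>
      (\<forall>j. j + 1 < length vs \<longrightarrow> edge_block p k (vs ! j) (vs ! (j + 1)) \<noteq> None)}"

text \<open>Blocks of a path: blocks vs ! (j - 2) is B^j, for 2 \<le> j \<le> N = length vs.\<close>
definition blocks :: "nat \<Rightarrow> nat \<Rightarrow> vtx list \<Rightarrow> (nat \<times> nat) list" where
  "blocks p k vs = map (\<lambda>j. the (edge_block p k (vs ! j) (vs ! (j + 1)))) [0..<length vs - 1]"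

definition Des :: "nat \<Rightarrow> nat \<Rightarrow> vtx list \<Rightarrow> nat set" where
  "Des p k vs = (let B = blocks p k vs; N = length vs;
                     m = (\<lambda>j. fst (B ! (j - 2))); n = (\<lambda>j. snd (B ! (j - 2))) in
     {j. j = 1 \<and> 2 \<le> N \<and> (\<exists>t. m 2 = p^k * t \<and> 2 * t < p - 1)}
     \<union> {j. 3 \<le> j \<and> j < N \<and> m j > m (j + 1) \<and> n j < n (j + 1)})"

definition des :: "nat \<Rightarrow> nat \<Rightarrow> vtx list \<Rightarrow> nat" where
  "des p k vs = card (Des p k vs)"

definition Fib_M :: "nat \<Rightarrow> nat \<Rightarrow> vtx \<Rightarrow> nat" where
  "Fib_M p k v = (\<Sum>P\<in>paths p k v. des p k P)"

end

theory Submission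
  imports Defs
begin

(* Every path to V_{2,l} has the form S_i -> V_{1,l1} -> W_{2,L} -> V_{2,l} with
   L = l + p^k t (t < p), l1 = L div p and i = p^k t0 + l1 (t0 <= p - 2), so paths
   correspond to pairs (t, t0), and only 1 and 3 can be descents.  Position 1 is a
   descent iff t0 < (p-1)/2.  Blocks B^3 and B^4 both have p^k (p-1) nodes, so position 3
   is a descent iff n_3 < n_4.  Writing p^k = p q with q odd and l = p u + r, this
   inequality compares numbers written with "digits" t, u, r, and it holds iff
   t < (p-1)/2, or t = (p-1)/2 and 2 l < p^k - 1.  Counting the pairs gives
   p (p-1)/2 + (p-1) ((p-1)/2 + [2 l < p^k - 1]). *)

lemma edge_block_into_S: "edge_block p k u (S i) = None"
  by (cases u) auto

lemma snoc_in_paths: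
  assumes ws: "ws \<in> paths p k u" and uv: "edge_block p k u v \<noteq> None"
  shows "ws @ [v] \<in> paths p k v"
proof -
  have "edge_block p k ((ws @ [v]) ! j) ((ws @ [v]) ! (j + 1)) \<noteq> None"
    if "j + 1 < length ws + 1" for j
  proof (cases "j + 1 < length ws")
    case True
    with ws show ?thesis by (simp add: paths_def nth_append)
  next
    case False
    with that ws have "j = length ws - 1" "ws \<noteq> []" by (auto simp: paths_def)
    with ws uv show ?thesis by (simp add: paths_def nth_append last_conv_nth)
  qed
  with ws show ?thesis
    by (simp add: paths_def)
qed

lemma paths_snocE:
  assumes vs: "vs \<in> paths p k v"
  obtains "vs = [v]"
  | ws where "vs = ws @ [v]" "ws \<in> paths p k (last ws)" "edge_block p k (last ws) v \<noteq> None"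
proof -
  obtain ws where ws: "vs = ws @ [v]"
    using vs by (cases vs rule: rev_cases) (auto simp: paths_def)
  have edges: "edge_block p k (vs ! j) (vs ! (j + 1)) \<noteq> None" if "j + 1 < length vs" for j
    using vs that by (simp add: paths_def)
  show thesis
  proof (cases "ws = []")
    case False
    have "edge_block p k (ws ! j) (ws ! (j + 1)) \<noteq> None" if "j + 1 < length ws" for j
      using edges[of j] that by (simp add: ws nth_append)
    then have "ws \<in> paths p k (last ws)"
      using vs False by (auto simp: paths_def ws)
    moreover have "edge_block p k (last ws) v \<noteq> None"
      using edges[of "length ws - 1"] False by (simp add: ws nth_append last_conv_nth)
    ultimately show thesis
      using that ws by blast
  qed (use that ws in simp)
qed

lemma paths_S: "paths p k (S i) = (if valid_vtx p k (S i) then {[S i]} else {})"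
proof -
  have "vs = [S i]" if "vs \<in> paths p k (S i)" for vs
    using that by (rule paths_snocE) (simp_all add: edge_block_into_S)
  moreover have "[S i] \<in> paths p k (S i) \<longleftrightarrow> valid_vtx p k (S i)"
    by (simp add: paths_def)
  ultimately show ?thesis
    by auto
qed

lemma paths_snoc:
  assumes "\<not> is_S v"
  shows "paths p k v = (\<Union>u\<in>{u. edge_block p k u v \<noteq> None}. (\<lambda>ws. ws @ [v]) ` paths p k u)"
proof (intro equalityI subsetI)
  fix vs assume "vs \<in> paths p k v"
  then show "vs \<in> (\<Union>u\<in>{u. edge_block p k u v \<noteq> None}. (\<lambda>ws. ws @ [v]) ` paths p k u)"
  proof (rule paths_snocE)
    assume "vs = [v]"
    with \<open>vs \<in> paths p k v\<close> assms show ?thesis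
      by (simp add: paths_def)
  qed blast
qed (auto intro: snoc_in_paths)

lemma add_mult_less_mult:
  fixes a m t n :: nat
  assumes "a < m" "t < n"
  shows "a + m * t < m * n"
proof -
  have "a + m * t < m * (t + 1)"
    using assms(1) by simp
  also have "\<dots> \<le> m * n"
    using assms(2) by (intro mult_le_mono2) simp
  finally show ?thesis .
qed

lemma edge_block_S_V:
  assumes "t \<le> p - 2" "l < p^k" "2 \<le> p"
  shows "edge_block p k (S (p^k * t + l)) (V 1 l) = Some (p^k * t, p^k * (p - 2 - t))"
proof -
  have "l + p^k * t < p^k * (p - 1)"
    using assms by (intro add_mult_less_mult) auto
  then show ?thesis
    using assms by (auto simp: Let_def add.commute)
qed

lemma edge_block_V_W:
  assumes "2 \<le> s" "L < p^(k+1)" "0 < p"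
  shows "edge_block p k (V (s - 1) (L div p)) (W s L) =
    Some (p^k * (p - 1) - ((p - 1) * (L div p) + L mod p), (p - 1) * (L div p) + L mod p)"
proof -
  have "L div p < p^k"
    using assms by (simp add: div_less_iff_less_mult mult.commute)
  moreover have "L mod p \<le> p - 1"
    using assms by (simp add: less_Suc_eq_le[symmetric])
  ultimately show ?thesis
    using assms by (auto simp: Let_def minus_mult_div_eq_mod intro: exI[of _ "L mod p"])
qed

lemma edge_block_W_V:
  assumes "2 \<le> s" "l < p^k" "t < p"
  shows "edge_block p k (W s (l + p^k * t)) (V s l) = Some (p^k * t, p^k * (p - 1 - t))"
proof -
  have "l + p^k * t < p^(k+1)"
    using add_mult_less_mult[OF assms(2,3)] by (simp add: mult.commute)
  then show ?thesis
    using assms by (simp add: Let_def)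
qed

lemma edge_block_into_V1:
  assumes "l < p^k" "2 \<le> p"
  shows "edge_block p k u (V 1 l) \<noteq> None \<longleftrightarrow> (\<exists>t\<le>p - 2. u = S (p^k * t + l))"
proof
  assume "edge_block p k u (V 1 l) \<noteq> None"
  then show "\<exists>t\<le>p - 2. u = S (p^k * t + l)"
    by (cases u) (auto simp: Let_def split: if_splits)
next
  assume "\<exists>t\<le>p - 2. u = S (p^k * t + l)"
  then show "edge_block p k u (V 1 l) \<noteq> None"
    using edge_block_S_V[OF _ assms] by blast
qed

lemma edge_block_into_W:
  assumes "2 \<le> s" "L < p^(k+1)" "0 < p"
  shows "edge_block p k u (W s L) \<noteq> None \<longleftrightarrow> u = V (s - 1) (L div p)"
proof -
  have "edge_block p k (V (s - 1) (L div p)) (W s L) \<noteq> None"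
    using edge_block_V_W[OF assms] by simp
  moreover have "u = V (s - 1) (L div p)" if "edge_block p k u (W s L) \<noteq> None"
    using that assms by (cases u) (auto simp: Let_def split: if_splits)
  ultimately show ?thesis
    by blast
qed

lemma edge_block_into_V:
  assumes "2 \<le> s" "l < p^k"
  shows "edge_block p k u (V s l) \<noteq> None \<longleftrightarrow> (\<exists>t<p. u = W s (l + p^k * t))"
proof
  assume "edge_block p k u (V s l) \<noteq> None"
  then obtain L where u: "u = W s L" and L: "L < p^(k+1)" and l: "l = L - p^k * (L div p^k)"
    using assms by (cases u) (auto simp: Let_def split: if_splits)
  have "L div p^k < p"
    using L less_mult_imp_div_less[of L p "p^k"] by simp
  moreover have "L = l + p^k * (L div p^k)"
    using l by (simp add: minus_mult_div_eq_mod)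
  ultimately show "\<exists>t<p. u = W s (l + p^k * t)"
    using u by blast
qed (use assms edge_block_W_V in auto)

lemma paths_V1:
  assumes "l < p^k" "2 \<le> p"
  shows "paths p k (V 1 l) = (\<lambda>t. [S (p^k * t + l), V 1 l]) ` {..p - 2}"
proof -
  have "valid_vtx p k (S (p^k * t + l))" if "t \<le> p - 2" for t
    using add_mult_less_mult[OF assms(1), of t "p - 1"] that assms(2) by (simp add: add.commute)
  moreover have "{u. edge_block p k u (V 1 l) \<noteq> None} = (\<lambda>t. S (p^k * t + l)) ` {..p - 2}"
    using edge_block_into_V1[OF assms] by auto
  moreover have "paths p k (V 1 l) =
      (\<Union>u\<in>{u. edge_block p k u (V 1 l) \<noteq> None}. (\<lambda>ws. ws @ [V 1 l]) ` paths p k u)"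
    by (simp add: paths_snoc del: edge_block.simps)
  ultimately show ?thesis
    by (auto simp: paths_S simp del: edge_block.simps)
qed

lemma paths_W:
  assumes "2 \<le> s" "L < p^(k+1)" "0 < p"
  shows "paths p k (W s L) = (\<lambda>ws. ws @ [W s L]) ` paths p k (V (s - 1) (L div p))"
proof -
  have "{u. edge_block p k u (W s L) \<noteq> None} = {V (s - 1) (L div p)}"
    using edge_block_into_W[OF assms] by auto
  then show ?thesis
    unfolding paths_snoc[of "W s L", simplified] by simp
qed

lemma paths_V:
  assumes "2 \<le> s" "l < p^k"
  shows "paths p k (V s l) = (\<Union>t<p. (\<lambda>ws. ws @ [V s l]) ` paths p k (W s (l + p^k * t)))"
proof -
  have "{u. edge_block p k u (V s l) \<noteq> None} = (\<lambda>t. W s (l + p^k * t)) ` {..<p}"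
    using edge_block_into_V[OF assms] by auto
  then show ?thesis
    unfolding paths_snoc[of "V s l", simplified] by simp
qed

definition path_to_V2 :: "nat \<Rightarrow> nat \<Rightarrow> nat \<Rightarrow> nat \<Rightarrow> nat \<Rightarrow> vtx list" where
  "path_to_V2 p k l t t0 =
     (let L = l + p^k * t in [S (p^k * t0 + L div p), V 1 (L div p), W 2 L, V 2 l])"

lemma paths_V2:
  assumes "2 \<le> p" "l < p^k"
  shows "paths p k (V 2 l) = (\<lambda>(t, t0). path_to_V2 p k l t t0) ` ({..<p} \<times> {..p - 2})"
proof -
  have "(\<lambda>ws. ws @ [V 2 l]) ` paths p k (W 2 (l + p^k * t)) =
      (\<lambda>t0. path_to_V2 p k l t t0) ` {..p - 2}" if "t < p" for t
  proof -
    define L where "L = l + p^k * t"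
    have L: "L < p^(k+1)"
      using add_mult_less_mult[OF assms(2) that] by (simp add: L_def mult.commute)
    then have "L div p < p^k"
      using less_mult_imp_div_less[of L "p^k" p] by (simp add: mult.commute)
    have "paths p k (W 2 L) = (\<lambda>ws. ws @ [W 2 L]) ` paths p k (V 1 (L div p))"
      using paths_W[of 2 L p k] L assms(1) by simp
    also have "\<dots> = (\<lambda>t0. [S (p^k * t0 + L div p), V 1 (L div p), W 2 L]) ` {..p - 2}"
      using paths_V1[OF \<open>L div p < p^k\<close> assms(1)] by (simp add: image_image)
    finally show ?thesis
      by (simp add: image_image path_to_V2_def L_def Let_def)
  qed
  with assms show ?thesis
    by (auto simp: paths_V path_to_V2_def)
qed

lemma mult_add_less_mult_add_iff:
  fixes d u r c e :: nat
  assumes "r \<le> d" "0 < e" "e \<le> d"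
  shows "d * u + r < d * c + e \<longleftrightarrow> u < c \<or> (u = c \<and> r < e)"
proof (cases u c rule: linorder_cases)
  case less
  then have "d * u + r \<le> d * c"
    using assms(1) mult_le_mono2[of "u + 1" c d] by simp
  with less assms(2) show ?thesis
    by simp
next
  case greater
  then have "d * c + e \<le> d * u + r"
    using assms(3) mult_le_mono2[of "c + 1" u d] by simp
  with greater show ?thesis
    by simp
qed simp

lemma descent_at_3_iff:
  fixes p k l t h :: nat
  assumes p: "p = 2 * h + 1" and "1 \<le> h" "1 \<le> k" "l < p^k" "t < p"
  defines "n \<equiv> (p - 1) * ((l + p^k * t) div p) + (l + p^k * t) mod p"
  shows "p^k * t < p^k * (p - 1) - n \<and> n < p^k * (p - 1 - t) \<longleftrightarrow>
    t < h \<or> (t = h \<and> 2 * l < p^k - 1)"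
proof -
  define q where "q = p^(k - 1)"
  have pk: "p^k = p * q"
    using \<open>1 \<le> k\<close> by (simp add: q_def power_eq_if)
  have "odd q"
    using p by (simp add: q_def)
  then obtain c where q: "q = 2 * c + 1"
    by (rule oddE)
  define u r where "u = l div p" and "r = l mod p"
  have l: "l = p * u + r"
    by (simp add: u_def r_def)
  have "r < p"
    using p by (simp add: r_def)
  have "u < q"
    using \<open>l < p^k\<close> less_mult_imp_div_less[of l q p] by (simp add: u_def pk mult.commute)
  have "l + p^k * t = r + p * (u + q * t)"
    by (simp add: l pk algebra_simps)
  then have "(l + p^k * t) div p = u + q * t" "(l + p^k * t) mod p = r"
    using \<open>r < p\<close> by simp_all
  then have n: "n = 2 * h * u + r + 2 * h * q * t"
    by (simp add: n_def p algebra_simps)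
  have "p^k * t < p^k * (p - 1) - n \<and> n < p^k * (p - 1 - t) \<longleftrightarrow> n + p^k * t < p^k * (p - 1)"
    using \<open>t < p\<close> by (auto simp: diff_mult_distrib2 less_diff_conv intro: mult_le_mono2)
  also have "\<dots> \<longleftrightarrow> (4 * h + 1) * q * t + (2 * h * u + r) < (4 * h + 1) * q * h + h * q"
    unfolding n pk unfolding p by (simp add: algebra_simps)
  also have "\<dots> \<longleftrightarrow> t < h \<or> (t = h \<and> 2 * h * u + r < h * q)"
  proof (rule mult_add_less_mult_add_iff)
    have "2 * h * u + r \<le> 2 * h * q"
      using \<open>u < q\<close> \<open>r < p\<close> p mult_le_mono2[of "u + 1" q "2 * h"] by simp
    then show "2 * h * u + r \<le> (4 * h + 1) * q"
      by simp
  qed (use \<open>1 \<le> h\<close> q in simp_all)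
  also have "2 * h * u + r < h * q \<longleftrightarrow> u < c \<or> (u = c \<and> r < h)"
    using mult_add_less_mult_add_iff[of r "2 * h" h u c] \<open>r < p\<close> p \<open>1 \<le> h\<close>
    by (simp add: q algebra_simps)
  also have "\<dots> \<longleftrightarrow> p * u + r < p * c + h"
    using mult_add_less_mult_add_iff[of r p h u c] \<open>r < p\<close> p \<open>1 \<le> h\<close> by simp
  also have "\<dots> \<longleftrightarrow> 2 * l < p^k - 1"
  proof -
    have "p^k - 1 = 2 * (p * c + h)"
      unfolding pk q by (simp add: p algebra_simps)
    then show ?thesis
      unfolding l by presburger
  qed
  finally show ?thesis .
qed

lemma blocks_Cons_Cons:
  "blocks p k (u # v # vs) = the (edge_block p k u v) # blocks p k (v # vs)"
  by (simp add: blocks_def upt_conv_Cons map_Suc_upt[symmetric] del: upt_Suc)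

lemma blocks_singleton: "blocks p k [v] = []"
  by (simp add: blocks_def)

lemma Des_of_length_4:
  assumes "length vs = 4" "blocks p k vs = [(m2, n2), (m3, n3), (m4, n4)]"
  shows "Des p k vs =
    {j. j = 1 \<and> (\<exists>t. m2 = p^k * t \<and> 2 * t < p - 1)} \<union> {j. j = 3 \<and> m4 < m3 \<and> n3 < n4}"
proof -
  have "{j. 3 \<le> j \<and> j < 4 \<and> Q j} = {j. j = 3 \<and> Q 3}" for Q :: "nat \<Rightarrow> bool"
    by (auto simp: eval_nat_numeral le_Suc_eq less_Suc_eq)
  then show ?thesis
    unfolding Des_def Let_def assms by simp
qed

lemma des_path_to_V2:
  assumes p: "p = 2 * h + 1" and "1 \<le> h" "1 \<le> k" "l < p^k" "t < p" "t0 \<le> p - 2"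
  shows "des p k (path_to_V2 p k l t t0) =
    of_bool (t0 < h) + of_bool (t < h \<or> (t = h \<and> 2 * l < p^k - 1))"
proof -
  define L where "L = l + p^k * t"
  define n where "n = (p - 1) * (L div p) + L mod p"
  have "2 \<le> p"
    using p \<open>1 \<le> h\<close> by simp
  have L: "L < p^(k+1)"
    using add_mult_less_mult[OF \<open>l < p^k\<close> \<open>t < p\<close>] by (simp add: L_def mult.commute)
  then have "L div p < p^k"
    using less_mult_imp_div_less[of L "p^k" p] by (simp add: mult.commute)
  have path: "path_to_V2 p k l t t0 = [S (p^k * t0 + L div p), V 1 (L div p), W 2 L, V 2 l]"
    by (simp add: path_to_V2_def L_def Let_def)
  have "edge_block p k (V 1 (L div p)) (W 2 L) = Some (p^k * (p - 1) - n, n)"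
    using edge_block_V_W[of 2 L p k] L \<open>2 \<le> p\<close> by (simp add: n_def del: edge_block.simps)
  then have "blocks p k (path_to_V2 p k l t t0) =
      [(p^k * t0, p^k * (p - 2 - t0)), (p^k * (p - 1) - n, n), (p^k * t, p^k * (p - 1 - t))]"
    using edge_block_S_V[OF \<open>t0 \<le> p - 2\<close> \<open>L div p < p^k\<close> \<open>2 \<le> p\<close>]
      edge_block_W_V[of 2 l p k t] \<open>l < p^k\<close> \<open>t < p\<close>
    by (simp add: path L_def blocks_Cons_Cons blocks_singleton del: edge_block.simps)
  then have "Des p k (path_to_V2 p k l t t0) =
      {j. j = 1 \<and> (\<exists>t'. p^k * t0 = p^k * t' \<and> 2 * t' < p - 1)} \<union>
      {j. j = 3 \<and> p^k * t < p^k * (p - 1) - n \<and> n < p^k * (p - 1 - t)}"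
    by (rule Des_of_length_4[rotated]) (simp add: path)
  also have "\<dots> = {j. j = 1 \<and> t0 < h} \<union> {j. j = 3 \<and> (t < h \<or> (t = h \<and> 2 * l < p^k - 1))}"
    using descent_at_3_iff[OF assms(1-5)] \<open>2 \<le> p\<close> p by (auto simp: n_def L_def)
  finally show ?thesis
    by (simp add: des_def card_Un_disjoint)
qed

lemma inj_path_to_V2:
  assumes "0 < p"
  shows "inj (\<lambda>(t, t0). path_to_V2 p k l t t0)"
  using assms by (auto intro!: injI simp: path_to_V2_def Let_def)

lemma Fib_M_V2_eq_sum:
  assumes "2 \<le> p" "l < p^k"
  shows "Fib_M p k (V 2 l) = (\<Sum>(t, t0)\<in>{..<p} \<times> {..p - 2}. des p k (path_to_V2 p k l t t0))"
  using inj_path_to_V2[of p k l] assms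
  by (simp add: Fib_M_def paths_V2 sum.reindex inj_on_subset prod.case_distrib)

lemma sum_descent_indicators:
  fixes p h :: nat and A :: bool
  assumes p: "p = 2 * h + 1" and "1 \<le> h"
  shows "(\<Sum>(t, t0)\<in>{..<p} \<times> {..p - 2}. of_bool (t0 < h) + of_bool (t < h \<or> (t = h \<and> A))) =
    p * h + (p - 1) * (h + of_bool A)"
proof -
  define Q where "Q t \<longleftrightarrow> t < h \<or> (t = h \<and> A)" for t
  have inner: "(\<Sum>t0\<le>p - 2. of_bool (t0 < h) + x) = h + (p - 1) * x" for x :: nat
  proof -
    have "{..p - 2} \<inter> {t0. t0 < h} = {..<h}"
      using p by auto
    then show ?thesis
      using p \<open>1 \<le> h\<close> by (simp add: sum.distrib algebra_simps)
  qed
  have outer: "(\<Sum>t<p. of_bool (Q t)) = h + of_bool A"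
  proof -
    have "{..<p} \<inter> {t. Q t} = {..<h + of_bool A}"
      using p by (auto simp: Q_def)
    then show ?thesis
      by (subst sum_of_bool_eq) simp_all
  qed
  have "(\<Sum>(t, t0)\<in>{..<p} \<times> {..p - 2}. of_bool (t0 < h) + of_bool (Q t)) =
      (\<Sum>t<p. \<Sum>t0\<le>p - 2. of_bool (t0 < h) + of_bool (Q t))"
    by (rule sum.cartesian_product[symmetric])
  also have "\<dots> = (\<Sum>t<p. h + (p - 1) * of_bool (Q t))"
    by (simp only: inner)
  also have "\<dots> = p * h + (p - 1) * (h + of_bool A)"
    by (simp only: sum.distrib sum_distrib_left[symmetric] outer) simp
  finally show ?thesis
    by (simp only: Q_def)
qed

theorem mainTheorem4:
  fixes p k l :: nat
  assumes "prime p" and "odd p" and "1 \<le> k" and "l < p^k"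
  shows "Fib_M p k (V 2 l) =
           (if 2 * l < p^k - 1 then (p - 1) div 2 * (2 * p + 1)
            else (p - 1) div 2 * (2 * p - 1))"
proof -
  obtain h where p: "p = 2 * h + 1"
    using \<open>odd p\<close> by (rule oddE)
  have "2 \<le> p"
    using \<open>prime p\<close> by (rule prime_ge_2_nat)
  then have "1 \<le> h"
    using p by simp
  let ?A = "2 * l < p^k - 1"
  have "Fib_M p k (V 2 l) =
      (\<Sum>(t, t0)\<in>{..<p} \<times> {..p - 2}. of_bool (t0 < h) + of_bool (t < h \<or> (t = h \<and> ?A)))"
    unfolding Fib_M_V2_eq_sum[OF \<open>2 \<le> p\<close> \<open>l < p^k\<close>]
    using des_path_to_V2[OF p \<open>1 \<le> h\<close> \<open>1 \<le> k\<close> \<open>l < p^k\<close>] by (intro sum.cong) auto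
  also have "\<dots> = p * h + (p - 1) * (h + of_bool ?A)"
    by (rule sum_descent_indicators[OF p \<open>1 \<le> h\<close>])
  finally show ?thesis
    by (simp add: p algebra_simps)
qed

end
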